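(* Fix an integer $n\geq 3$ and let $\mathcal E/\mathbb{Q}$ be an elliptic curve without complex multiplication. For each prime $p$ of good reduction, let $E/\mathbb{F}_p$ be the reduction of $\mathcal E$ modulo $p$ and set $$\Delta''_{E/\mathbb{F}_p;n}:=\frac{a_{E/\mathbb{F}_p;n}-\big((5-n)+(n-1)a_{E/\mathbb{F}_p}-(n-1)p\big)}{-6/\sqrt p}.$$ Define $\Theta''_{E/\mathbb{F}_p;n}\in[0,\pi]$ by $\cos\Theta''_{E/\mathbb{F}_p;n}=\Delta''_{E/\mathbb{F}_p;n}$ whenever $|\Delta''_{E/\mathbb{F}_p;n}|\leq 1$. Then for all real $0\leq\alpha<\beta\leq\pi$, $$\lim_{N\to\infty}\frac{\#\{p\leq N:\ p \text{ prime of good reduction},\ |\Delta''_{E/\mathbb{F}_p;n}|\le 1,\ \alpha\leq\Theta''_{E/\mathbb{F}_p;n}\leq\beta\}}{\#\{p\leq N:\ p\text{ prime}\}}=\frac{2}{\pi}\int_\alpha^\beta\sin^2\theta\,d\theta.$$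
   Context: For an elliptic curve $E$ over $\mathbb{F}_q$: $a_{E/\mathbb{F}_q}:=q+1-\#E(\mathbb{F}_q)$. For $m\geq 1$, $\beta_{E/\mathbb{F}_q;m}(0):=\sum_{\mathcal V}\frac{1}{\#\mathrm{Aut}(\mathcal V)}$ with $\mathcal V$ running over isomorphism classes of semi-stable vector bundles of rank $m$ and degree $0$ on $E$, and $\beta_{E/\mathbb{F}_q;0}(0):=1$. The rank $n$ $a$-invariant is $a_{E/\mathbb{F}_q;n}:=(q^n+1)-(q^n-1)\frac{\beta_{E/\mathbb{F}_q;n}(0)}{\beta_{E/\mathbb{F}_q;n-1}(0)}$. Known background (Weng–Zagier): $(q^m-1)\beta_{E/\mathbb{F}_q;m}(0)=(q^m+q^{m-1}-a_{E/\mathbb{F}_q})\beta_{E/\mathbb{F}_q;m-1}(0)-(q^{m-1}-q)\beta_{E/\mathbb{F}_q;m-2}(0)$ for $m\ge1$ with $\beta_{E/\mathbb{F}_q;-1}(0):=0$. The classical Sato–Tate law (Taylor et al.) for non-CM $\mathcal E/\mathbb{Q}$ may be used: the angles $\theta_p\in[0,\pi]$ with $\cos\theta_p=a_{E/\mathbb{F}_p}/(2\sqrt p)$ are equidistributed with respect to $\frac{2}{\pi}\sin^2\theta\,d\theta$. *)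

theory Defs
  imports "HOL-Analysis.Analysis" "HOL-Computational_Algebra.Primes"
begin

text \<open>An elliptic curve over Q is given by an integral (long) Weierstrass model
  y^2 + a1 x y + a3 y = x^3 + a2 x^2 + a4 x + a6, coefficients (a1,a2,a3,a4,a6),
  with nonzero discriminant.  Every elliptic curve over Q has such a model.\<close>

type_synonym wmodel = "int \<times> int \<times> int \<times> int \<times> int"

definition wdisc :: "wmodel \<Rightarrow> int" where
  "wdisc W = (case W of (a1, a2, a3, a4, a6) \<Rightarrow>
     (let b2 = a1^2 + 4*a2; b4 = 2*a4 + a1*a3; b6 = a3^2 + 4*a6;
          b8 = a1^2*a6 + 4*a2*a6 - a1*a3*a4 + a2*a3^2 - a4^2
      in (- (b2^2*b8)) - 8*b4^3 - 27*b6^2 + 9*b2*b4*b6))"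

text \<open>Two integral Weierstrass models define Q-isomorphic curves iff they are related by
  a change of variables x = u^2 x' + r, y = u^3 y' + s u^2 x' + t with u,r,s,t rational,
  u nonzero (Silverman, Table 3.1).\<close>

fun wiso :: "wmodel \<Rightarrow> wmodel \<Rightarrow> bool" where
  "wiso (a1, a2, a3, a4, a6) (b1, b2, b3, b4, b6) =
     (\<exists>u r sv t :: rat. u \<noteq> 0 \<and>
        (u  *  of_int b1 = of_int a1 + 2 * sv) \<and>
        (u^2  *  of_int b2 = of_int a2 - sv  *  of_int a1 + 3 * r - sv^2) \<and>
        (u^3  *  of_int b3 = of_int a3 + r  *  of_int a1 + 2 * t) \<and>
        (u^4  *  of_int b4 = of_int a4 - sv  *  of_int a3 + 2 * r  *  of_int a2 - (t + r * sv)  *  of_int a1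
                          + 3 * r^2 - 2 * sv * t) \<and>
        (u^6  *  of_int b6 = of_int a6 + r  *  of_int a4 + r^2  *  of_int a2 + r^3 - t  *  of_int a3
                          - t^2 - r * t  *  of_int a1))"

definition good_model :: "wmodel \<Rightarrow> nat \<Rightarrow> wmodel \<Rightarrow> bool" where
  "good_model W p W' \<longleftrightarrow> wiso W W' \<and> \<not> (int p dvd wdisc W')"

definition good_red :: "wmodel \<Rightarrow> nat \<Rightarrow> bool" where
  "good_red W p \<longleftrightarrow> prime p \<and> (\<exists>W'. good_model W p W')"

definition npoints :: "wmodel \<Rightarrow> nat \<Rightarrow> nat" where
  "npoints W p = (case W of (a1, a2, a3, a4, a6) \<Rightarrow>
     1 + card {(x, y). x < p \<and> y < p \<and>
        (int y^2 + a1 * int x * int y + a3 * int y) mod int p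
          = (int x^3 + a2 * int x^2 + a4 * int x + a6) mod int p})"

definition frob_trace :: "wmodel \<Rightarrow> nat \<Rightarrow> int" where
  "frob_trace W p = int p + 1 - int (npoints (SOME W'. good_model W p W') p)"

text \<open>beta_{E/F_q;m}(0), computed from the Weng--Zagier recursion (depends only on q and a).\<close>

fun wz_beta :: "real \<Rightarrow> real \<Rightarrow> nat \<Rightarrow> real" where
  "wz_beta q a 0 = 1"
| "wz_beta q a (Suc 0) = (q + 1 - a) / (q - 1)"
| "wz_beta q a (Suc (Suc m)) =
     ((q^(m+2) + q^(m+1) - a) * wz_beta q a (Suc m) - (q^(m+1) - q) * wz_beta q a m)
       / (q^(m+2) - 1)"

definition a_inv :: "real \<Rightarrow> real \<Rightarrow> nat \<Rightarrow> real" where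
  "a_inv q a n = (q^n + 1) - (q^n - 1) * wz_beta q a n / wz_beta q a (n - 1)"

definition Delta2 :: "wmodel \<Rightarrow> nat \<Rightarrow> nat \<Rightarrow> real" where
  "Delta2 W n p = (let a = real_of_int (frob_trace W p) in
     (a_inv (real p) a n - ((5 - real n) + (real n - 1) * a - (real n - 1) * real p))
       / (- 6 / sqrt (real p)))"

definition sato_tate :: "wmodel \<Rightarrow> bool" where
  "sato_tate W \<longleftrightarrow> (\<forall>\<alpha> \<beta>. 0 \<le> \<alpha> \<and> \<alpha> < \<beta> \<and> \<beta> \<le> pi \<longrightarrow>
     ((\<lambda>N. real (card {p. p \<le> N \<and> good_red W p \<and>
              \<bar>real_of_int (frob_trace W p)\<bar> \<le> 2 * sqrt (real p) \<and>
              \<alpha> \<le> arccos (real_of_int (frob_trace W p) / (2 * sqrt (real p))) \<and>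
              arccos (real_of_int (frob_trace W p) / (2 * sqrt (real p))) \<le> \<beta>})
           / real (card {p. p \<le> N \<and> prime p}))
      \<longlonglongrightarrow> 2 / pi * integral {\<alpha>..\<beta>} (\<lambda>\<theta>. sin \<theta> ^ 2)))"

end

theory Submission
  imports Defs "HOL-Real_Asymp.Real_Asymp"
begin

(* Write q = p and a = a_{E/F_p}. Under the Hasse bound, the Weng--Zagier recursion becomes
   a_{m+2} = b + a - 1 - q + (b - 1 - q)(b - 2) / (q^{m+1} + 1 - b) with b = a_{m+1}; the
   correction term is O(1/q) as soon as m + 1 >= 3, so by induction from an explicit a_3 one gets
   a_n = (5 - n) + (n - 1) a - (n - 1) q - 3a/q + O(1/q) uniformly in a. Hence
   Delta'' = a / (2 sqrt p) + O(1/sqrt p) is a vanishing perturbation of cos theta_p, and since the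
   Sato--Tate distribution function of cos theta is continuous, counting primes in slightly enlarged
   and shrunk intervals transfers the Sato--Tate law from cos theta_p to Delta''. The Hasse bound is
   never proved: the Sato--Tate hypothesis on [0, pi] already makes its exceptions a density-zero set. *)

lemma a_inv_one: "q > 1 \<Longrightarrow> a_inv q a 1 = a"
  by (simp add: a_inv_def field_simps)

lemma a_inv_Suc_Suc:
  assumes q: "q > 1" and "wz_beta q a k \<noteq> 0" and "wz_beta q a (Suc k) \<noteq> 0"
  defines "b \<equiv> a_inv q a (Suc k)"
  shows "a_inv q a (Suc (Suc k)) = b + a - 1 - q + (b - 1 - q) * (b - 2) / (q ^ Suc k + 1 - b)"
proof -
  define Q where "Q = q ^ Suc k"
  define x where "x = wz_beta q a k"
  define y where "y = wz_beta q a (Suc k)"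
  have "Q > 1" unfolding Q_def using q by (intro one_less_power) auto
  have "q * Q > 1" using \<open>Q > 1\<close> q by (metis less_1_mult)
  have "x \<noteq> 0" "y \<noteq> 0" using assms by (auto simp: x_def y_def)
  have b: "b = Q + 1 - (Q - 1) * y / x"
    unfolding b_def a_inv_def Q_def x_def y_def by simp
  then have Qb: "Q + 1 - b = (Q - 1) * y / x" by simp
  have "a_inv q a (Suc (Suc k))
      = q * Q + 1 - (q * Q - 1) * ((q * Q + Q - a) * y - (Q - q) * x) / (q * Q - 1) / y"
    by (simp add: a_inv_def Q_def x_def y_def algebra_simps)
  also have "\<dots> = 1 - Q + a + (Q - q) * x / y"
    using \<open>q * Q > 1\<close> \<open>y \<noteq> 0\<close> by (simp add: field_simps)
  also have "\<dots> = b + a - 1 - q + (b - 1 - q) * (b - 2) / (Q + 1 - b)"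
    unfolding Qb unfolding b using \<open>Q > 1\<close> \<open>x \<noteq> 0\<close> \<open>y \<noteq> 0\<close>
    by (simp add: field_simps)
  finally show ?thesis unfolding Q_def .
qed

definition a_inv_main_term :: "nat \<Rightarrow> real \<Rightarrow> real \<Rightarrow> real" where
  "a_inv_main_term m q a = (5 - real m) + (real m - 1) * a - (real m - 1) * q - 3 * a / q"

lemma a_inv_main_term_Suc:
  "a_inv_main_term (Suc m) q a = a_inv_main_term m q a + a - 1 - q"
  by (simp add: a_inv_main_term_def algebra_simps)

lemma hasse_bound_consequences:
  assumes q: "q \<ge> 16" and a: "\<bar>a\<bar> \<le> 2 * sqrt q"
  shows "\<bar>a\<bar> \<le> q / 2" "a\<^sup>2 \<le> 4 * q"
proof -
  have "4 \<le> sqrt q" using q real_sqrt_le_mono[of 16 q] by simp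
  then have "4 * sqrt q \<le> sqrt q * sqrt q" using q by (intro mult_right_mono) auto
  then show "\<bar>a\<bar> \<le> q / 2" using a q by simp
  have "\<bar>a\<bar>\<^sup>2 \<le> (2 * sqrt q)\<^sup>2" using a by (intro power_mono) auto
  then show "a\<^sup>2 \<le> 4 * q" using q by (simp add: power_mult_distrib)
qed

lemma wz_beta_Suc_nonzero:
  assumes q: "q \<ge> 16" and a: "\<bar>a\<bar> \<le> 2 * sqrt q" and "wz_beta q a k \<noteq> 0"
    and near: "\<bar>a_inv q a (Suc k) - a_inv_main_term (Suc k) q a\<bar> \<le> 1"
  shows "wz_beta q a (Suc k) \<noteq> 0"
proof
  assume "wz_beta q a (Suc k) = 0"
  then have "a_inv q a (Suc k) = q ^ Suc k + 1" by (simp add: a_inv_def)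
  moreover have "q \<le> q ^ Suc k" using q by (simp add: self_le_power)
  moreover have "a_inv_main_term (Suc k) q a \<le> 6"
  proof -
    have "\<bar>a\<bar> \<le> q / 2" using hasse_bound_consequences[OF q a] by simp
    then have "a - q \<le> 0" and "\<bar>3 * a / q\<bar> \<le> 3 / 2"
      using q by (auto simp: abs_mult field_simps)
    moreover from this(1) have "real k * (a - q) \<le> 0" by (simp add: mult_nonneg_nonpos)
    moreover have "a_inv_main_term (Suc k) q a = 4 - real k + real k * (a - q) - 3 * a / q"
      by (simp add: a_inv_main_term_def algebra_simps)
    ultimately show ?thesis unfolding abs_le_iff by linarith
  qed
  ultimately show False using near q unfolding abs_le_iff by linarith
qed

lemma a_inv_two:
  assumes q: "q \<ge> 16" and a: "\<bar>a\<bar> \<le> 2 * sqrt q"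
  shows "wz_beta q a 1 \<noteq> 0" "wz_beta q a 2 \<noteq> 0" "a_inv q a 2 = a + 1 - q"
proof -
  have "\<bar>a\<bar> \<le> q / 2" using hasse_bound_consequences[OF q a] by simp
  then have "q + 1 - a > 0" using q by linarith
  then show B1: "wz_beta q a 1 \<noteq> 0" using q by simp
  have "a_inv q a (Suc (Suc 0)) = a + a - 1 - q + (a - 1 - q) * (a - 2) / (q + 1 - a)"
    using a_inv_Suc_Suc[of q a 0] a_inv_one[of q a] B1 q by simp
  also have "(a - 1 - q) * (a - 2) / (q + 1 - a) = 2 - a"
    using \<open>q + 1 - a > 0\<close> by (simp add: field_simps)
  finally show A2: "a_inv q a 2 = a + 1 - q" by (simp add: numeral_2_eq_2)
  show "wz_beta q a 2 \<noteq> 0"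
  proof
    assume "wz_beta q a 2 = 0"
    then have "a_inv q a 2 = q\<^sup>2 + 1" by (simp add: a_inv_def)
    moreover have "q\<^sup>2 \<ge> 0" by simp
    ultimately show False using A2 \<open>\<bar>a\<bar> \<le> q / 2\<close> q by linarith
  qed
qed

text \<open>The induction starts at 3: at \<open>m = 2\<close> the error \<open>3 a / q - 2\<close> is not \<open>O(1/q)\<close>.\<close>

lemma a_inv_three:
  assumes q: "q \<ge> 16" and a: "\<bar>a\<bar> \<le> 2 * sqrt q"
  shows "(\<forall>j\<le>3. wz_beta q a j \<noteq> 0) \<and> \<bar>a_inv q a 3 - a_inv_main_term 3 q a\<bar> \<le> 7 / q"
proof -
  have aq: "\<bar>a\<bar> \<le> q / 2" and a2: "a\<^sup>2 \<le> 4 * q" using hasse_bound_consequences[OF q a] by auto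
  note two = a_inv_two[OF q a]
  have den: "q\<^sup>2 \<le> q\<^sup>2 + q - a" using aq q by linarith
  have "a_inv q a (Suc (Suc 1)) = (a + 1 - q) + a - 1 - q
      + ((a + 1 - q) - 1 - q) * ((a + 1 - q) - 2) / (q ^ Suc 1 + 1 - (a + 1 - q))"
    using a_inv_Suc_Suc[of q a 1] two q by (simp add: numeral_2_eq_2)
  then have A3: "a_inv q a 3 = 2 * a - 2 * q + (a - 2 * q) * (a - 1 - q) / (q\<^sup>2 + q - a)"
    by (simp add: numeral_3_eq_3 algebra_simps power2_eq_square)
  have "q\<^sup>2 + q - a \<noteq> 0" "q \<noteq> 0" using den q by auto
  then have "a_inv q a 3 - a_inv_main_term 3 q a = (4*a*q + a\<^sup>2*q - 3*a\<^sup>2) / (q * (q\<^sup>2 + q - a))"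
    unfolding A3 a_inv_main_term_def
    by (simp add: divide_simps) (simp add: algebra_simps power2_eq_square)
  also have "\<bar>\<dots>\<bar> \<le> 7 * q\<^sup>2 / (q * q\<^sup>2)"
  proof (unfold abs_divide, rule frac_le)
    have "\<bar>4*a*q\<bar> \<le> 2 * q\<^sup>2" using aq q by (simp add: abs_mult power2_eq_square)
    moreover have "a\<^sup>2*q \<le> 4 * q\<^sup>2" using a2 q by (simp add: power2_eq_square mult_right_mono)
    moreover have "3 * a\<^sup>2 \<le> q\<^sup>2"
      using a2 q mult_right_mono[of 16 q q] unfolding power2_eq_square by linarith
    moreover have "a\<^sup>2 * q \<ge> 0" "a\<^sup>2 \<ge> 0" using q by simp_all
    ultimately show "\<bar>4*a*q + a\<^sup>2*q - 3*a\<^sup>2\<bar> \<le> 7 * q\<^sup>2"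
      unfolding abs_le_iff by linarith
    show "q * q\<^sup>2 \<le> \<bar>q * (q\<^sup>2 + q - a)\<bar>"
      using den q by (simp add: abs_mult mult_left_mono)
  qed (use q in auto)
  also have "7 * q\<^sup>2 / (q * q\<^sup>2) = 7 / q" using q by simp
  finally have err: "\<bar>a_inv q a 3 - a_inv_main_term 3 q a\<bar> \<le> 7 / q" .
  moreover have "7 / q \<le> 1" using q by simp
  ultimately have "wz_beta q a (Suc 2) \<noteq> 0"
    using err by (intro wz_beta_Suc_nonzero[OF q a two(2)]) (simp add: numeral_3_eq_3)
  with two have "\<forall>j\<le>3. wz_beta q a j \<noteq> 0"
    by (auto simp: le_Suc_eq numeral_3_eq_3 numeral_2_eq_2)
  with err show ?thesis by simp
qed

lemma a_inv_correction_bound: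
  fixes q b B :: real
  assumes q: "q \<ge> 1" and m: "m \<ge> 3" and qB: "2 * B \<le> q" and b: "\<bar>b\<bar> \<le> B * q"
  shows "\<bar>(b - 1 - q) * (b - 2) / (q ^ m + 1 - b)\<bar> \<le> 2 * (B + 2)\<^sup>2 / q"
proof -
  have "0 \<le> B * q" using b abs_ge_zero order_trans by blast
  then have "B \<ge> 0" using q by (simp add: zero_le_mult_iff)
  have "\<bar>(b - 1 - q) * (b - 2)\<bar> \<le> ((B + 2) * q) * ((B + 2) * q)"
    unfolding abs_mult using b q \<open>B \<ge> 0\<close>
    by (intro mult_mono) (auto simp: abs_le_iff algebra_simps)
  moreover have "q * q * q / 2 \<le> q ^ m + 1 - b"
  proof -
    have "q * q * q \<le> q ^ m" using q m power_increasing[of 3 m q] by (simp add: power3_eq_cube)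
    moreover have "B * q \<le> q / 2 * q" using qB q by (intro mult_right_mono) auto
    moreover have "q * q \<le> q * q * q" using q by (simp add: mult_le_cancel_left1)
    ultimately show ?thesis using b unfolding abs_le_iff by linarith
  qed
  moreover have "q * q * q / 2 > 0" using q by simp
  ultimately have "\<bar>(b - 1 - q) * (b - 2) / (q ^ m + 1 - b)\<bar>
      \<le> ((B + 2) * q) * ((B + 2) * q) / (q * q * q / 2)"
    unfolding abs_divide by (intro frac_le) auto
  also have "\<dots> = 2 * (B + 2)\<^sup>2 / q" using q by (simp add: field_simps power2_eq_square)
  finally show ?thesis .
qed

lemma a_inv_main_term_abs_le:
  assumes q: "q \<ge> 16" and a: "\<bar>a\<bar> \<le> 2 * sqrt q"
  shows "\<bar>a_inv_main_term m q a\<bar> \<le> (3 * real m + 8) * q"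
proof -
  have aq: "\<bar>a\<bar> \<le> q / 2" using hasse_bound_consequences[OF q a] by simp
  have "\<bar>5 - real m\<bar> \<le> (real m + 5) * 1" by simp
  also have "\<dots> \<le> (real m + 5) * q" using q by (intro mult_left_mono) auto
  finally have "\<bar>5 - real m\<bar> \<le> (real m + 5) * q" .
  moreover have "\<bar>(real m - 1) * a\<bar> \<le> (real m + 1) * q"
    unfolding abs_mult using aq q by (intro mult_mono) auto
  moreover have "\<bar>(real m - 1) * q\<bar> \<le> (real m + 1) * q"
    unfolding abs_mult using q by (intro mult_mono) auto
  moreover have "\<bar>3 * a / q\<bar> \<le> q"
  proof -
    have "3 * \<bar>a\<bar> \<le> q * q" using aq q mult_right_mono[of 2 q q] by linarith
    then show ?thesis using q by (simp add: abs_mult field_simps)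
  qed
  moreover have "(3 * real m + 8) * q = (real m + 5) * q + (real m + 1) * q + (real m + 1) * q + q"
    by (simp add: algebra_simps)
  ultimately show ?thesis unfolding a_inv_main_term_def abs_le_iff by linarith
qed

lemma a_inv_asymptotic_step:
  assumes q: "q \<ge> 16" and a: "\<bar>a\<bar> \<le> 2 * sqrt q" and m: "m \<ge> 3"
    and nz: "\<forall>j\<le>m. wz_beta q a j \<noteq> 0"
    and err: "\<bar>a_inv q a m - a_inv_main_term m q a\<bar> \<le> K / q" and K: "K \<ge> 0"
    and qB: "2 * (3 * real m + 8 + K) \<le> q" and qK: "K + 2 * (3 * real m + 10 + K)\<^sup>2 \<le> q"
  shows "(\<forall>j\<le>Suc m. wz_beta q a j \<noteq> 0) \<and>
    \<bar>a_inv q a (Suc m) - a_inv_main_term (Suc m) q a\<bar> \<le> (K + 2 * (3 * real m + 10 + K)\<^sup>2) / q"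
proof -
  define B where "B = 3 * real m + 8 + K"
  define b where "b = a_inv q a m"
  obtain k where k: "m = Suc k" using m by (cases m) auto
  have "a_inv q a (Suc m) = b + a - 1 - q + (b - 1 - q) * (b - 2) / (q ^ m + 1 - b)"
    unfolding b_def k using nz k q by (intro a_inv_Suc_Suc) auto
  then have split: "a_inv q a (Suc m) - a_inv_main_term (Suc m) q a
      = (b - a_inv_main_term m q a) + (b - 1 - q) * (b - 2) / (q ^ m + 1 - b)"
    by (simp add: a_inv_main_term_Suc)
  have "\<bar>b\<bar> \<le> B * q"
  proof -
    have "1 * 1 \<le> q * q" using q by (intro mult_mono) auto
    then have "K / q \<le> K * q"
      using K q by (simp add: field_simps) (metis mult_left_mono mult.right_neutral)
    then show ?thesis
      using err a_inv_main_term_abs_le[OF q a, of m] unfolding b_def B_def abs_le_iff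
      by (simp add: algebra_simps)
  qed
  then have corr: "\<bar>(b - 1 - q) * (b - 2) / (q ^ m + 1 - b)\<bar> \<le> 2 * (B + 2)\<^sup>2 / q"
    using q m qB by (intro a_inv_correction_bound) (auto simp: B_def)
  have "\<bar>a_inv q a (Suc m) - a_inv_main_term (Suc m) q a\<bar>
      \<le> \<bar>b - a_inv_main_term m q a\<bar> + \<bar>(b - 1 - q) * (b - 2) / (q ^ m + 1 - b)\<bar>"
    unfolding split by (rule abs_triangle_ineq)
  also have "\<dots> \<le> K / q + 2 * (B + 2)\<^sup>2 / q"
    using err corr unfolding b_def by (rule add_mono)
  also have "\<dots> = (K + 2 * (3 * real m + 10 + K)\<^sup>2) / q"
    by (simp add: B_def add_divide_distrib algebra_simps)
  finally have bound: "\<bar>a_inv q a (Suc m) - a_inv_main_term (Suc m) q a\<bar>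
      \<le> (K + 2 * (3 * real m + 10 + K)\<^sup>2) / q" .
  moreover have "(K + 2 * (3 * real m + 10 + K)\<^sup>2) / q \<le> 1" using qK q by simp
  ultimately have "wz_beta q a (Suc m) \<noteq> 0"
    using nz k by (intro wz_beta_Suc_nonzero[OF q a]) auto
  with nz bound show ?thesis by (auto simp: le_Suc_eq)
qed

lemma a_inv_asymptotic:
  assumes "m \<ge> 3"
  shows "\<exists>K\<ge>0. \<exists>Q\<ge>16. \<forall>q a. Q \<le> q \<and> \<bar>a\<bar> \<le> 2 * sqrt q \<longrightarrow>
    (\<forall>j\<le>m. wz_beta q a j \<noteq> 0) \<and> \<bar>a_inv q a m - a_inv_main_term m q a\<bar> \<le> K / q"
  using assms
proof (induction m rule: nat_induct_at_least)
  case base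
  show ?case using a_inv_three by (intro exI[of _ 7] exI[of _ 16]) auto
next
  case (Suc m)
  then obtain K Q where "K \<ge> 0" "Q \<ge> 16" and IH: "\<And>q a. Q \<le> q \<Longrightarrow> \<bar>a\<bar> \<le> 2 * sqrt q \<Longrightarrow>
      (\<forall>j\<le>m. wz_beta q a j \<noteq> 0) \<and> \<bar>a_inv q a m - a_inv_main_term m q a\<bar> \<le> K / q"
    by blast
  define K' where "K' = K + 2 * (3 * real m + 10 + K)\<^sup>2"
  define Q' where "Q' = max Q (max (2 * (3 * real m + 8 + K)) K')"
  have "\<forall>q a. Q' \<le> q \<and> \<bar>a\<bar> \<le> 2 * sqrt q \<longrightarrow> (\<forall>j\<le>Suc m. wz_beta q a j \<noteq> 0) \<and>
      \<bar>a_inv q a (Suc m) - a_inv_main_term (Suc m) q a\<bar> \<le> K' / q"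
  proof (intro allI impI, elim conjE)
    fix q a :: real
    assume "Q' \<le> q" and a: "\<bar>a\<bar> \<le> 2 * sqrt q"
    then have q: "q \<ge> 16" "Q \<le> q" using \<open>Q \<ge> 16\<close> by (auto simp: Q'_def)
    show "(\<forall>j\<le>Suc m. wz_beta q a j \<noteq> 0) \<and>
      \<bar>a_inv q a (Suc m) - a_inv_main_term (Suc m) q a\<bar> \<le> K' / q"
      unfolding K'_def using IH[OF q(2) a] \<open>Q' \<le> q\<close> \<open>K \<ge> 0\<close> Suc.hyps
      by (intro a_inv_asymptotic_step[OF q(1) a]) (auto simp: Q'_def K'_def)
  qed
  moreover have "K' \<ge> 0" "Q' \<ge> 16" using \<open>K \<ge> 0\<close> \<open>Q \<ge> 16\<close> by (auto simp: K'_def Q'_def)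
  ultimately show ?case by blast
qed

definition frob_cos :: "wmodel \<Rightarrow> nat \<Rightarrow> real" where
  "frob_cos W p = real_of_int (frob_trace W p) / (2 * sqrt (real p))"

lemma Delta2_minus_frob_cos:
  assumes "p > 0"
  shows "Delta2 W n p - frob_cos W p = - (a_inv (real p) (frob_trace W p) n
    - a_inv_main_term n (real p) (frob_trace W p)) * sqrt (real p) / 6"
  using assms unfolding Delta2_def frob_cos_def a_inv_main_term_def Let_def
  by (simp add: field_simps)

lemma eventually_Delta2_near_frob_cos:
  assumes "n \<ge> 3" and "\<delta> > 0"
  shows "eventually (\<lambda>p. \<bar>frob_cos W p\<bar> \<le> 1 \<longrightarrow> \<bar>Delta2 W n p - frob_cos W p\<bar> \<le> \<delta>) sequentially"
proof -
  obtain K Q where "Q \<ge> 16" and K: "\<And>q a. Q \<le> q \<Longrightarrow> \<bar>a\<bar> \<le> 2 * sqrt q \<Longrightarrow>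
      \<bar>a_inv q a n - a_inv_main_term n q a\<bar> \<le> K / q"
    using a_inv_asymptotic[OF assms(1)] by blast
  have "eventually (\<lambda>p. Q \<le> real p) sequentially"
    using filterlim_real_sequentially by (simp add: filterlim_at_top)
  moreover have "((\<lambda>p. K / (6 * sqrt (real p))) \<longlongrightarrow> 0) sequentially" by real_asymp
  then have "eventually (\<lambda>p. K / (6 * sqrt (real p)) < \<delta>) sequentially"
    using \<open>\<delta> > 0\<close> by (rule order_tendstoD)
  ultimately show ?thesis
  proof eventually_elim
    case (elim p)
    define q a where "q = real p" and "a = real_of_int (frob_trace W p)"
    have "q \<ge> 16" "sqrt q > 0" "p > 0" using elim \<open>Q \<ge> 16\<close> by (auto simp: q_def)
    show ?case
    proof
      assume "\<bar>frob_cos W p\<bar> \<le> 1"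
      then have "\<bar>a\<bar> \<le> 2 * sqrt q"
        using \<open>sqrt q > 0\<close> by (simp add: frob_cos_def a_def q_def abs_divide divide_le_eq)
      then have err: "\<bar>a_inv q a n - a_inv_main_term n q a\<bar> \<le> K / q"
        using K elim by (simp add: q_def)
      have "\<bar>Delta2 W n p - frob_cos W p\<bar> = \<bar>a_inv q a n - a_inv_main_term n q a\<bar> * sqrt q / 6"
        using \<open>q \<ge> 16\<close> unfolding Delta2_minus_frob_cos[of p, OF \<open>p > 0\<close>]
        by (simp add: q_def a_def abs_mult)
      also have "\<dots> \<le> K / q * sqrt q / 6"
        using err \<open>sqrt q > 0\<close> by (intro divide_right_mono mult_right_mono) auto
      also have "\<dots> = K / (6 * sqrt q)"
        using \<open>sqrt q > 0\<close> \<open>q \<ge> 16\<close> by (simp add: field_simps)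
      finally show "\<bar>Delta2 W n p - frob_cos W p\<bar> \<le> \<delta>" using elim by (simp add: q_def)
    qed
  qed
qed

lemma arccos_window_iff:
  assumes "0 \<le> \<alpha>" "\<alpha> \<le> \<beta>" "\<beta> \<le> pi"
  shows "(\<bar>x\<bar> \<le> 1 \<and> \<alpha> \<le> arccos x \<and> arccos x \<le> \<beta>) \<longleftrightarrow> x \<in> {cos \<beta>..cos \<alpha>}"
proof
  assume x: "\<bar>x\<bar> \<le> 1 \<and> \<alpha> \<le> arccos x \<and> arccos x \<le> \<beta>"
  then have "0 \<le> arccos x" "arccos x \<le> pi" by (auto intro: arccos_lbound arccos_ubound)
  then have "cos \<beta> \<le> cos (arccos x) \<and> cos (arccos x) \<le> cos \<alpha>"
    using x assms by (auto simp: cos_mono_le_eq)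
  then show "x \<in> {cos \<beta>..cos \<alpha>}" using x by (simp add: abs_le_iff)
next
  assume x: "x \<in> {cos \<beta>..cos \<alpha>}"
  then have "\<bar>x\<bar> \<le> 1"
    using cos_ge_minus_one[of \<beta>] cos_le_one[of \<alpha>] unfolding abs_le_iff atLeastAtMost_iff by linarith
  moreover have "arccos (cos \<alpha>) \<le> arccos x" "arccos x \<le> arccos (cos \<beta>)"
    using x \<open>\<bar>x\<bar> \<le> 1\<close> by (auto intro!: arccos_le_arccos)
  ultimately show "\<bar>x\<bar> \<le> 1 \<and> \<alpha> \<le> arccos x \<and> arccos x \<le> \<beta>"
    using assms by (simp add: arccos_cos)
qed

definition sin_sq_primitive :: "real \<Rightarrow> real" where
  "sin_sq_primitive \<theta> = \<theta> / 2 - sin (2 * \<theta>) / 4"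

lemma integral_sin_sq:
  assumes "\<alpha> \<le> \<beta>"
  shows "integral {\<alpha>..\<beta>} (\<lambda>\<theta>. sin \<theta> ^ 2) = sin_sq_primitive \<beta> - sin_sq_primitive \<alpha>"
proof (rule integral_unique, rule fundamental_theorem_of_calculus[OF assms])
  fix \<theta> :: real
  have "(sin_sq_primitive has_real_derivative (1/2 - cos (2 * \<theta>) * 2 / 4)) (at \<theta>)"
    unfolding sin_sq_primitive_def by (auto intro!: derivative_eq_intros)
  moreover have "1/2 - cos (2 * \<theta>) * 2 / 4 = sin \<theta> ^ 2"
    using cos_double_sin[of \<theta>] by (simp add: field_simps)
  ultimately show "(sin_sq_primitive has_vector_derivative sin \<theta> ^ 2) (at \<theta> within {\<alpha>..\<beta>})"
    by (simp add: has_real_derivative_iff_has_vector_derivative has_vector_derivative_at_within)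
qed

definition value_set :: "(nat \<Rightarrow> bool) \<Rightarrow> (nat \<Rightarrow> real) \<Rightarrow> real \<Rightarrow> real \<Rightarrow> nat \<Rightarrow> nat set" where
  "value_set P f u v N = {p. p \<le> N \<and> P p \<and> f p \<in> {u..v}}"

lemma finite_value_set [simp]: "finite (value_set P f u v N)"
  unfolding value_set_def by (rule finite_subset[of _ "{..N}"]) auto

lemma filterlim_card_le_at_top:
  assumes "infinite {p::nat. P p}"
  shows "filterlim (\<lambda>N. real (card {p. p \<le> N \<and> P p})) at_top sequentially"
  unfolding filterlim_at_top
proof
  fix Z :: real
  obtain B where B: "finite B" "card B = nat \<lceil>Z\<rceil>" "B \<subseteq> {p. P p}"
    using infinite_arbitrarily_large[OF assms] by blast
  have "\<forall>N\<ge>Max B. B \<subseteq> {p. p \<le> N \<and> P p}"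
    using B(1,3) Max_ge[OF B(1)] le_trans by blast
  then have "eventually (\<lambda>N. B \<subseteq> {p. p \<le> N \<and> P p}) sequentially"
    by (auto simp: eventually_sequentially)
  then show "eventually (\<lambda>N. Z \<le> real (card {p. p \<le> N \<and> P p})) sequentially"
  proof eventually_elim
    case (elim N)
    then have "card B \<le> card {p. p \<le> N \<and> P p}" by (intro card_mono) auto
    then show ?case using B(2) by (metis of_nat_le_iff real_nat_ceiling_ge order_trans)
  qed
qed

lemma card_value_set_le_widened:
  assumes near: "\<And>p. P1 \<le> p \<Longrightarrow> P p \<Longrightarrow> \<bar>f p\<bar> \<le> 1 \<Longrightarrow> \<bar>g p - f p\<bar> \<le> \<delta>"
  shows "card (value_set P g u v N) \<le> card (value_set P f (max (-1) (u - \<delta>)) (min 1 (v + \<delta>)) N)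
    + (card {p. p \<le> N \<and> P p} - card (value_set P f (-1) 1 N)) + P1"
proof -
  let ?A = "value_set P f (max (-1) (u - \<delta>)) (min 1 (v + \<delta>)) N"
  let ?F = "value_set P f (-1) 1 N" and ?S = "{p. p \<le> N \<and> P p}"
  have "value_set P g u v N \<subseteq> ?A \<union> (?S - ?F) \<union> {..<P1}"
  proof
    fix p assume "p \<in> value_set P g u v N"
    then have p: "p \<le> N" "P p" "g p \<in> {u..v}" by (auto simp: value_set_def)
    show "p \<in> ?A \<union> (?S - ?F) \<union> {..<P1}"
    proof (cases "P1 \<le> p \<and> \<bar>f p\<bar> \<le> 1")
      case True
      then have "\<bar>g p - f p\<bar> \<le> \<delta>" using near p by blast
      then show ?thesis using p True by (auto simp: value_set_def abs_le_iff)
    qed (use p in \<open>auto simp: value_set_def abs_le_iff\<close>)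
  qed
  then have "card (value_set P g u v N) \<le> card (?A \<union> (?S - ?F) \<union> {..<P1})"
    by (intro card_mono) (auto intro: finite_subset[of _ "{..N}"])
  also have "\<dots> \<le> card ?A + card (?S - ?F) + P1"
    using card_Un_le[of "?A \<union> (?S - ?F)" "{..<P1}"] card_Un_le[of ?A "?S - ?F"] by simp
  also have "card (?S - ?F) = card ?S - card ?F"
    by (intro card_Diff_subset) (auto simp: value_set_def)
  finally show ?thesis .
qed

lemma card_value_set_ge_narrowed:
  assumes near: "\<And>p. P1 \<le> p \<Longrightarrow> P p \<Longrightarrow> \<bar>f p\<bar> \<le> 1 \<Longrightarrow> \<bar>g p - f p\<bar> \<le> \<delta>"
    and "\<delta> \<ge> 0" and uv: "-1 \<le> u" "v \<le> 1"
  shows "card (value_set P f (u + \<delta>) (v - \<delta>) N) \<le> card (value_set P g u v N) + P1"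
proof -
  have "value_set P f (u + \<delta>) (v - \<delta>) N \<subseteq> value_set P g u v N \<union> {..<P1}"
  proof
    fix p assume "p \<in> value_set P f (u + \<delta>) (v - \<delta>) N"
    then have p: "p \<le> N" "P p" "f p \<in> {u + \<delta>..v - \<delta>}" by (auto simp: value_set_def)
    show "p \<in> value_set P g u v N \<union> {..<P1}"
    proof (cases "P1 \<le> p \<and> \<bar>f p\<bar> \<le> 1")
      case True
      then have "\<bar>g p - f p\<bar> \<le> \<delta>" using near p by blast
      then show ?thesis using p by (auto simp: value_set_def abs_le_iff)
    qed (use p uv \<open>\<delta> \<ge> 0\<close> in \<open>auto simp: abs_le_iff\<close>)
  qed
  then have "card (value_set P f (u + \<delta>) (v - \<delta>) N) \<le> card (value_set P g u v N \<union> {..<P1})"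
    by (intro card_mono) auto
  also have "\<dots> \<le> card (value_set P g u v N) + P1"
    using card_Un_le[of "value_set P g u v N" "{..<P1}"] by simp
  finally show ?thesis .
qed

context
  fixes P :: "nat \<Rightarrow> bool" and f g c :: "nat \<Rightarrow> real" and \<Phi> :: "real \<Rightarrow> real"
  assumes c_at_top: "filterlim c at_top sequentially"
    and card_le_c: "\<And>N. real (card {p. p \<le> N \<and> P p}) \<le> c N"
    and \<Phi>_cont: "continuous_on {-1..1} \<Phi>"
    and \<Phi>_total: "\<Phi> 1 - \<Phi> (-1) = 1"
    and f_distributed: "\<And>u v. -1 \<le> u \<Longrightarrow> u < v \<Longrightarrow> v \<le> 1 \<Longrightarrow>
      (\<lambda>N. real (card (value_set P f u v N)) / c N) \<longlonglongrightarrow> \<Phi> v - \<Phi> u"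
    and g_near_f: "\<And>\<delta>. \<delta> > 0 \<Longrightarrow>
      eventually (\<lambda>p. P p \<and> \<bar>f p\<bar> \<le> 1 \<longrightarrow> \<bar>g p - f p\<bar> \<le> \<delta>) sequentially"
begin

lemma const_over_c_tendsto_0: "(\<lambda>N. C / c N) \<longlonglongrightarrow> 0"
  using c_at_top by (intro tendsto_divide_0[OF tendsto_const] filterlim_at_top_imp_at_infinity)

lemma eventually_c_pos: "eventually (\<lambda>N. c N > 0) sequentially"
  using c_at_top by (simp add: filterlim_at_top_dense)

lemma g_near_f_threshold:
  assumes "\<delta> > 0"
  obtains P1 where "\<And>p. P1 \<le> p \<Longrightarrow> P p \<Longrightarrow> \<bar>f p\<bar> \<le> 1 \<Longrightarrow> \<bar>g p - f p\<bar> \<le> \<delta>"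
  using g_near_f[OF assms] by (auto simp: eventually_sequentially)

lemma value_set_upper:
  assumes uv: "-1 \<le> u" "u < v" "v \<le> 1" and w: "\<Phi> v - \<Phi> u < w"
  shows "eventually (\<lambda>N. real (card (value_set P g u v N)) / c N < w) sequentially"
proof -
  define u' v' where "u' \<delta> = max (-1) (u - \<delta>)" and "v' \<delta> = min 1 (v + \<delta>)" for \<delta>
  have in_range: "eventually (\<lambda>\<delta>. u' \<delta> \<in> {-1..1} \<and> v' \<delta> \<in> {-1..1}) (at_right 0)"
    using eventually_at_right_less[of 0] by eventually_elim (use uv in \<open>auto simp: u'_def v'_def\<close>)
  have "(u' \<longlongrightarrow> max (-1) (u - 0)) (at_right 0)" "(v' \<longlongrightarrow> min 1 (v + 0)) (at_right 0)"
    unfolding u'_def v'_def by (intro tendsto_intros; simp)+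
  then have "((\<lambda>\<delta>. \<Phi> (v' \<delta>) - \<Phi> (u' \<delta>)) \<longlongrightarrow> \<Phi> v - \<Phi> u) (at_right 0)"
    using uv in_range
    by (intro tendsto_diff continuous_on_tendsto_compose[OF \<Phi>_cont]) (auto elim: eventually_mono)
  then have "eventually (\<lambda>\<delta>. \<delta> > 0 \<and> \<Phi> (v' \<delta>) - \<Phi> (u' \<delta>) < w) (at_right 0)"
    using w eventually_at_right_less[of 0] by (auto dest: order_tendstoD(2) intro: eventually_conj)
  then obtain \<delta> where "\<delta> > 0" and small: "\<Phi> (v' \<delta>) - \<Phi> (u' \<delta>) < w"
    using eventually_happens'[OF trivial_limit_at_right_real] by blast
  obtain P1 where near: "\<And>p. P1 \<le> p \<Longrightarrow> P p \<Longrightarrow> \<bar>f p\<bar> \<le> 1 \<Longrightarrow> \<bar>g p - f p\<bar> \<le> \<delta>"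
    using g_near_f_threshold[OF \<open>\<delta> > 0\<close>] by blast
  let ?A = "\<lambda>N. value_set P f (u' \<delta>) (v' \<delta>) N" and ?F = "\<lambda>N. value_set P f (-1) 1 N"
  \<comment> \<open>The points with \<open>\<bar>f p\<bar> > 1\<close> are negligible because \<open>f\<close> has full mass on \<open>[-1, 1]\<close>.\<close>
  have card_bound: "real (card (value_set P g u v N))
      \<le> real (card (?A N)) + (c N - real (card (?F N))) + real P1" for N
  proof -
    have "card (?F N) \<le> card {p. p \<le> N \<and> P p}"
      by (intro card_mono) (auto simp: value_set_def intro: finite_subset[of _ "{..N}"])
    then show ?thesis
      using card_value_set_le_widened[of P1 P f g \<delta> u v N, OF near] card_le_c[of N]
      unfolding u'_def v'_def by (simp add: of_nat_diff flip: of_nat_add)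
  qed
  have "(\<lambda>N. real (card (?A N)) / c N + (1 - real (card (?F N)) / c N) + real P1 / c N)
      \<longlonglongrightarrow> (\<Phi> (v' \<delta>) - \<Phi> (u' \<delta>)) + (1 - (\<Phi> 1 - \<Phi> (-1))) + 0"
    using uv \<open>\<delta> > 0\<close>
    by (intro tendsto_add tendsto_diff tendsto_const f_distributed const_over_c_tendsto_0)
      (auto simp: u'_def v'_def)
  then have "eventually (\<lambda>N. real (card (?A N)) / c N + (1 - real (card (?F N)) / c N)
      + real P1 / c N < w) sequentially"
    using small \<Phi>_total by (intro order_tendstoD(2)) auto
  with eventually_c_pos show ?thesis
  proof eventually_elim
    case (elim N)
    then show ?case using card_bound[of N] by (simp add: field_simps)
  qed
qed

lemma value_set_lower:
  assumes uv: "-1 \<le> u" "u < v" "v \<le> 1" and w: "w < \<Phi> v - \<Phi> u"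
  shows "eventually (\<lambda>N. w < real (card (value_set P g u v N)) / c N) sequentially"
proof -
  have "((\<lambda>\<delta>. \<delta>) \<longlongrightarrow> 0) (at_right (0::real))" by (rule tendsto_ident_at)
  then have "eventually (\<lambda>\<delta>. \<delta> < (v - u) / 2) (at_right 0)"
    using uv by (intro order_tendstoD(2)) auto
  then have in_range: "eventually (\<lambda>\<delta>. 0 < \<delta> \<and> \<delta> < (v - u) / 2) (at_right 0)"
    using eventually_at_right_less[of 0] by eventually_elim auto
  have "((\<lambda>\<delta>. u + \<delta>) \<longlongrightarrow> u + 0) (at_right 0)" "((\<lambda>\<delta>. v - \<delta>) \<longlongrightarrow> v - 0) (at_right 0)"
    by (intro tendsto_intros)+
  then have "((\<lambda>\<delta>. \<Phi> (v - \<delta>) - \<Phi> (u + \<delta>)) \<longlongrightarrow> \<Phi> v - \<Phi> u) (at_right 0)"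
    using uv in_range
    by (intro tendsto_diff continuous_on_tendsto_compose[OF \<Phi>_cont]) (auto elim!: eventually_mono)
  then have "eventually (\<lambda>\<delta>. w < \<Phi> (v - \<delta>) - \<Phi> (u + \<delta>)) (at_right 0)"
    using w by (rule order_tendstoD(1))
  with in_range have "eventually (\<lambda>\<delta>. (0 < \<delta> \<and> \<delta> < (v - u) / 2)
      \<and> w < \<Phi> (v - \<delta>) - \<Phi> (u + \<delta>)) (at_right 0)"
    by (rule eventually_conj)
  then obtain \<delta> where \<delta>: "0 < \<delta>" "\<delta> < (v - u) / 2" and large: "w < \<Phi> (v - \<delta>) - \<Phi> (u + \<delta>)"
    using eventually_happens'[OF trivial_limit_at_right_real] by blast
  obtain P1 where near: "\<And>p. P1 \<le> p \<Longrightarrow> P p \<Longrightarrow> \<bar>f p\<bar> \<le> 1 \<Longrightarrow> \<bar>g p - f p\<bar> \<le> \<delta>"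
    using g_near_f_threshold[OF \<delta>(1)] by blast
  let ?A = "\<lambda>N. value_set P f (u + \<delta>) (v - \<delta>) N"
  have "(\<lambda>N. real (card (?A N)) / c N - real P1 / c N) \<longlonglongrightarrow> \<Phi> (v - \<delta>) - \<Phi> (u + \<delta>) - 0"
    using uv \<delta> by (intro tendsto_diff f_distributed const_over_c_tendsto_0) auto
  then have "eventually (\<lambda>N. w < real (card (?A N)) / c N - real P1 / c N) sequentially"
    using large by (intro order_tendstoD(1)) auto
  with eventually_c_pos show ?thesis
  proof eventually_elim
    case (elim N)
    have "real (card (?A N)) \<le> real (card (value_set P g u v N)) + real P1"
      using card_value_set_ge_narrowed[of P1 P f g \<delta> u v N, OF near] \<delta> uv by (simp flip: of_nat_add)
    with elim show ?case by (simp add: field_simps)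
  qed
qed

lemma value_set_transfer:
  assumes "-1 \<le> u" "u < v" "v \<le> 1"
  shows "(\<lambda>N. real (card (value_set P g u v N)) / c N) \<longlonglongrightarrow> \<Phi> v - \<Phi> u"
  using value_set_lower[OF assms] value_set_upper[OF assms] by (rule order_tendstoI)

end

definition sato_tate_cdf :: "real \<Rightarrow> real" where
  "sato_tate_cdf x = 1 - 2 / pi * sin_sq_primitive (arccos x)"

lemma continuous_on_sato_tate_cdf: "continuous_on {-1..1} sato_tate_cdf"
  unfolding sato_tate_cdf_def sin_sq_primitive_def
  by (intro continuous_intros continuous_on_compose2[OF _ continuous_on_arccos']) auto

lemma sato_tate_cdf_total: "sato_tate_cdf 1 - sato_tate_cdf (-1) = 1"
  by (simp add: sato_tate_cdf_def sin_sq_primitive_def)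

lemma sato_tate_cdf_diff:
  assumes "0 \<le> \<alpha>" "\<alpha> \<le> \<beta>" "\<beta> \<le> pi"
  shows "sato_tate_cdf (cos \<alpha>) - sato_tate_cdf (cos \<beta>) = 2 / pi * integral {\<alpha>..\<beta>} (\<lambda>\<theta>. sin \<theta> ^ 2)"
  using assms by (simp add: sato_tate_cdf_def integral_sin_sq arccos_cos field_simps)

lemma good_red_frob_cos_le_1_iff:
  assumes "good_red W p"
  shows "\<bar>frob_cos W p\<bar> \<le> 1 \<longleftrightarrow> \<bar>real_of_int (frob_trace W p)\<bar> \<le> 2 * sqrt (real p)"
proof -
  have "sqrt (real p) > 0" using assms prime_gt_0_nat by (auto simp: good_red_def)
  then show ?thesis by (simp add: frob_cos_def abs_divide divide_le_eq)
qed

lemma sato_tate_value_set: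
  assumes "sato_tate W" and uv: "-1 \<le> u" "u < v" "v \<le> 1"
  shows "(\<lambda>N. real (card (value_set (good_red W) (frob_cos W) u v N)) / real (card {p. p \<le> N \<and> prime p}))
    \<longlonglongrightarrow> sato_tate_cdf v - sato_tate_cdf u"
proof -
  define \<alpha> \<beta> where "\<alpha> = arccos v" and "\<beta> = arccos u"
  have ab: "0 \<le> \<alpha>" "\<alpha> < \<beta>" "\<beta> \<le> pi"
    using uv by (auto simp: \<alpha>_def \<beta>_def intro: arccos_lbound arccos_ubound arccos_less_arccos)
  have uv_cos: "u = cos \<beta>" "v = cos \<alpha>" using uv by (simp_all add: \<alpha>_def \<beta>_def)
  have "(\<lambda>N. real (card {p. p \<le> N \<and> good_red W p \<and>
          \<bar>real_of_int (frob_trace W p)\<bar> \<le> 2 * sqrt (real p) \<and>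
          \<alpha> \<le> arccos (real_of_int (frob_trace W p) / (2 * sqrt (real p))) \<and>
          arccos (real_of_int (frob_trace W p) / (2 * sqrt (real p))) \<le> \<beta>})
      / real (card {p. p \<le> N \<and> prime p})) \<longlonglongrightarrow> 2 / pi * integral {\<alpha>..\<beta>} (\<lambda>\<theta>. sin \<theta> ^ 2)"
    (is "(\<lambda>N. real (card (?S N)) / _) \<longlonglongrightarrow> _")
    using assms(1) ab unfolding sato_tate_def by blast
  moreover have "?S N = value_set (good_red W) (frob_cos W) u v N" for N
    using good_red_frob_cos_le_1_iff[of W] arccos_window_iff[of \<alpha> \<beta>] ab
    unfolding value_set_def uv_cos frob_cos_def[symmetric] by auto
  moreover have "sato_tate_cdf v - sato_tate_cdf u = 2 / pi * integral {\<alpha>..\<beta>} (\<lambda>\<theta>. sin \<theta> ^ 2)"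
    using sato_tate_cdf_diff[of \<alpha> \<beta>] ab uv_cos by simp
  ultimately show ?thesis by simp
qed

theorem theorem14:
  fixes W :: wmodel and n :: nat and \<alpha> \<beta> :: real
  assumes "n \<ge> 3"
    and "wdisc W \<noteq> 0"
    and "sato_tate W"
    and "0 \<le> \<alpha>" and "\<alpha> < \<beta>" and "\<beta> \<le> pi"
  shows "(\<lambda>N. real (card {p. p \<le> N \<and> good_red W p \<and> \<bar>Delta2 W n p\<bar> \<le> 1 \<and>
              \<alpha> \<le> arccos (Delta2 W n p) \<and> arccos (Delta2 W n p) \<le> \<beta>})
           / real (card {p. p \<le> N \<and> prime p}))
         \<longlonglongrightarrow> 2 / pi * integral {\<alpha>..\<beta>} (\<lambda>\<theta>. sin \<theta> ^ 2)"
proof -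
  have window: "{p. p \<le> N \<and> good_red W p \<and> \<bar>Delta2 W n p\<bar> \<le> 1 \<and>
      \<alpha> \<le> arccos (Delta2 W n p) \<and> arccos (Delta2 W n p) \<le> \<beta>}
      = value_set (good_red W) (Delta2 W n) (cos \<beta>) (cos \<alpha>) N" for N
    using arccos_window_iff[of \<alpha> \<beta>] assms(4-6) by (auto simp: value_set_def)
  have "cos \<beta> < cos \<alpha>" using assms(4-6) by (intro cos_monotone_0_pi)
  have "(\<lambda>N. real (card (value_set (good_red W) (Delta2 W n) (cos \<beta>) (cos \<alpha>) N))
      / real (card {p. p \<le> N \<and> prime p})) \<longlonglongrightarrow> sato_tate_cdf (cos \<alpha>) - sato_tate_cdf (cos \<beta>)"
  proof (rule value_set_transfer[where f = "frob_cos W"])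
    show "filterlim (\<lambda>N. real (card {p. p \<le> N \<and> prime p})) at_top sequentially"
      using filterlim_card_le_at_top primes_infinite by simp
    show "real (card {p. p \<le> N \<and> good_red W p}) \<le> real (card {p. p \<le> N \<and> prime p})" for N
      by (intro of_nat_mono card_mono) (auto simp: good_red_def)
    show "eventually (\<lambda>p. good_red W p \<and> \<bar>frob_cos W p\<bar> \<le> 1 \<longrightarrow>
        \<bar>Delta2 W n p - frob_cos W p\<bar> \<le> \<delta>) sequentially"
      if "\<delta> > 0" for \<delta>
      using eventually_Delta2_near_frob_cos[OF assms(1) that, of W] by (rule eventually_mono) simp
  qed (use \<open>cos \<beta> < cos \<alpha>\<close> continuous_on_sato_tate_cdf sato_tate_cdf_total
        sato_tate_value_set[OF assms(3)] in auto)
  moreover have "sato_tate_cdf (cos \<alpha>) - sato_tate_cdf (cos \<beta>) = 2 / pi * integral {\<alpha>..\<beta>} (\<lambda>\<theta>. sin \<theta> ^ 2)"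
    using sato_tate_cdf_diff assms(4-6) by simp
  ultimately show ?thesis unfolding window by simp
qed

end
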